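(* Let $\mathcal S\subset\mathbb R^n$ be a finite positive spanning set of unit vectors and $P=\{x\in\mathbb R^n: x^\top d\le 1 \text{ for all } d\in\mathcal S\}$. (i) Let $x$ be a vertex of $P$, $\mathcal T=\{d\in\mathcal S: x^\top d=1\}$, and let $\mathcal B\subseteq\mathcal T$ be a basis of $\mathbb R^n$. Then $\frac{x}{\|x\|}$ is a Gram vector of $\mathcal B$ with Gram value $\frac1{\|x\|}$, and $K^\circ\!\left(\mathcal B,\frac{x}{\|x\|}\right)\cap\mathcal S=\varnothing$. (ii) Let $\mathcal B\subseteq\mathcal S$ be a basis of $\mathbb R^n$ and $u$ the Gram vector of $\mathcal B$ with Gram value $\alpha$. If $K^\circ(\mathcal B,u)\cap\mathcal S=\varnothing$, then $\frac u\alpha$ is the unique vertex of $P$ such that $\left(\frac u\alpha\right)^\top d=1$ for all $d\in\mathcal B$.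
   Context: A finite set $\{d_1,\dots,d_k\}\subset\mathbb R^n$ is positive spanning if $\{\sum_i\lambda_id_i:\lambda_i\ge0\}=\mathbb R^n$. For a basis $\mathcal B=\{d_1,\dots,d_n\}$ of $\mathbb R^n$, a Gram vector of $\mathcal B$ with Gram value $\gamma_{\mathcal B}$ is a unit vector $u$ with $u^\top d_i=\gamma_{\mathcal B}>0$ for all $i$. For a set $\mathcal B$ of unit vectors and a unit vector $y$ with $d^\top y=\alpha_{\mathcal B}$ for all $d\in\mathcal B$ (a common value), $K^\circ(\mathcal B,y)=\{v\in\mathbb R^n: v\ne\mathbf 0,\ \frac{v^\top y}{\|v\|\|y\|}>\alpha_{\mathcal B}\}\cup\{\mathbf 0\}$. *)

theory Defs
  imports "HOL-Analysis.Analysis"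
begin

definition positive_spanning :: "'a::euclidean_space set \<Rightarrow> bool" where
  "positive_spanning S \<longleftrightarrow>
     {(\<Sum>d\<in>S. c d *\<^sub>R d) | c. \<forall>d\<in>S. c d \<ge> 0} = UNIV"

definition is_basis :: "'a::euclidean_space set \<Rightarrow> bool" where
  "is_basis B \<longleftrightarrow> independent B \<and> span B = UNIV"

definition gram_vector :: "'a::euclidean_space set \<Rightarrow> 'a \<Rightarrow> real \<Rightarrow> bool" where
  "gram_vector B u g \<longleftrightarrow> norm u = 1 \<and> g > 0 \<and> (\<forall>d\<in>B. u \<bullet> d = g)"

text \<open>The open cone K(B,y); alpha is the common value of d.y for d in B.\<close>
definition Kcirc :: "'a::euclidean_space \<Rightarrow> real \<Rightarrow> 'a set" where
  "Kcirc y \<alpha> = {v. v \<noteq> 0 \<and> (v \<bullet> y) / (norm v * norm y) > \<alpha>} \<union> {0}"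

definition polytope_P :: "'a::euclidean_space set \<Rightarrow> 'a set" where
  "polytope_P S = {x. \<forall>d\<in>S. x \<bullet> d \<le> 1}"

end

theory Submission
  imports Defs
begin

text \<open>For a unit vector \<open>u\<close> and \<open>\<alpha> > 0\<close>, a unit vector \<open>d\<close> lies in \<open>K\<^sup>\<circ>(u, \<alpha>)\<close> exactly when it
  violates the constraint \<open>(u/\<alpha>) \<bullet> d \<le> 1\<close>. Hence the cone misses \<open>S\<close> iff \<open>u/\<alpha> \<in> P\<close>, which is
  both directions of the theorem up to extremality. A point of \<open>P\<close> that is tight on a basis is
  extreme, since a segment through it must be tight on the basis too, and a vector is determined
  by its inner products with a spanning set; this also gives uniqueness.\<close>

lemma eq_if_inner_eq_on_spanning:
  fixes x y :: "'a::euclidean_space"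
  assumes "span B = UNIV" and "\<forall>d\<in>B. x \<bullet> d = y \<bullet> d"
  shows "x = y"
proof -
  have "orthogonal (x - y) (x - y)"
    by (rule orthogonal_to_span[of "x - y" B])
      (use assms in \<open>auto simp: orthogonal_def inner_diff_left\<close>)
  then show ?thesis by (simp add: orthogonal_def)
qed

lemma nonempty_if_span_UNIV:
  assumes "span (B :: 'a::euclidean_space set) = UNIV"
  shows "B \<noteq> {}"
proof
  assume "B = {}"
  obtain b :: 'a where "b \<in> Basis" using nonempty_Basis by blast
  then have "b \<notin> span B"
    using \<open>B = {}\<close> by (auto simp: nonzero_Basis)
  with assms show False by simp
qed

lemma unit_in_Kcirc_iff:
  fixes v y :: "'a::euclidean_space"
  assumes "norm v = 1" and "norm y = 1"
  shows "v \<in> Kcirc y \<alpha> \<longleftrightarrow> v \<bullet> y > \<alpha>"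
proof -
  have "v \<noteq> 0" using assms(1) by auto
  then show ?thesis using assms by (simp add: Kcirc_def)
qed

lemma Kcirc_disjoint_iff_in_polytope_P:
  fixes S :: "'a::euclidean_space set"
  assumes unit: "\<forall>d\<in>S. norm d = 1" and "norm u = 1" and "\<alpha> > 0"
  shows "Kcirc u \<alpha> \<inter> S = {} \<longleftrightarrow> (1 / \<alpha>) *\<^sub>R u \<in> polytope_P S"
proof -
  have "d \<in> Kcirc u \<alpha> \<longleftrightarrow> \<not> ((1 / \<alpha>) *\<^sub>R u) \<bullet> d \<le> 1" if "d \<in> S" for d
    using unit_in_Kcirc_iff[of d u \<alpha>] unit that assms(2,3)
    by (auto simp: inner_commute field_simps)
  then show ?thesis by (auto simp: polytope_P_def)
qed

lemma convex_combination_eq_bound: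
  fixes a b t :: real
  assumes "(1 - t) * a + t * b = 1" and "a \<le> 1" and "b \<le> 1" and "0 < t" and "t < 1"
  shows "a = 1 \<and> b = 1"
proof -
  have "(1 - t) * a \<le> 1 - t" and "t * b \<le> t"
    using assms by (simp_all add: mult_left_le)
  then have "(1 - t) * a = 1 - t" and "t * b = t"
    using assms(1) by linarith+
  then show ?thesis using assms(4,5) by simp
qed

lemma extreme_point_of_polytope_P_if_tight_on_spanning:
  fixes S :: "'a::euclidean_space set"
  assumes "B \<subseteq> S" and span: "span B = UNIV"
    and xP: "x \<in> polytope_P S" and tight: "\<forall>d\<in>B. x \<bullet> d = 1"
  shows "x extreme_point_of polytope_P S"
  unfolding extreme_point_of_def
proof (intro conjI ballI xP notI)
  fix a b
  assume aP: "a \<in> polytope_P S" and bP: "b \<in> polytope_P S" and "x \<in> open_segment a b"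
  then obtain t where "a \<noteq> b" and t: "0 < t" "t < 1" and x: "x = (1 - t) *\<^sub>R a + t *\<^sub>R b"
    by (auto simp: in_segment)
  have "a \<bullet> d = 1 \<and> b \<bullet> d = 1" if "d \<in> B" for d
  proof (rule convex_combination_eq_bound)
    show "(1 - t) * (a \<bullet> d) + t * (b \<bullet> d) = 1"
      using tight that by (simp add: x inner_add_left)
    show "a \<bullet> d \<le> 1" "b \<bullet> d \<le> 1"
      using aP bP that \<open>B \<subseteq> S\<close> by (auto simp: polytope_P_def)
  qed (use t in auto)
  then have "a = b" using eq_if_inner_eq_on_spanning[OF span] by auto
  with \<open>a \<noteq> b\<close> show False ..
qed

theorem theorem8:
  fixes S :: "'a::euclidean_space set"
  assumes fin: "finite S"
    and ps: "positive_spanning S"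
    and unit: "\<forall>d\<in>S. norm d = 1"
  shows
    "(\<forall>x B. x extreme_point_of polytope_P S \<longrightarrow>
        B \<subseteq> {d\<in>S. x \<bullet> d = 1} \<longrightarrow> is_basis B \<longrightarrow>
        gram_vector B ((1 / norm x) *\<^sub>R x) (1 / norm x) \<and>
        (\<forall>d\<in>B. d \<bullet> ((1 / norm x) *\<^sub>R x) = 1 / norm x) \<and>
        Kcirc ((1 / norm x) *\<^sub>R x) (1 / norm x) \<inter> S = {})
   \<and> (\<forall>B u \<alpha>. B \<subseteq> S \<longrightarrow> is_basis B \<longrightarrow> gram_vector B u \<alpha> \<longrightarrow>
        Kcirc u \<alpha> \<inter> S = {} \<longrightarrow>
        ((1 / \<alpha>) *\<^sub>R u) extreme_point_of polytope_P S \<and>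
        (\<forall>d\<in>B. ((1 / \<alpha>) *\<^sub>R u) \<bullet> d = 1) \<and>
        (\<forall>y. y extreme_point_of polytope_P S \<and> (\<forall>d\<in>B. y \<bullet> d = 1)
              \<longrightarrow> y = (1 / \<alpha>) *\<^sub>R u))"
proof (intro conjI allI impI)
  fix x B
  assume ext: "x extreme_point_of polytope_P S" and BT: "B \<subseteq> {d\<in>S. x \<bullet> d = 1}"
    and "is_basis B"
  then obtain d0 where "d0 \<in> B" "x \<bullet> d0 = 1"
    using nonempty_if_span_UNIV[of B] by (auto simp: is_basis_def)
  then have nx: "norm x > 0" by auto
  then show "gram_vector B ((1 / norm x) *\<^sub>R x) (1 / norm x)"
    and "\<forall>d\<in>B. d \<bullet> ((1 / norm x) *\<^sub>R x) = 1 / norm x"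
    using BT by (auto simp: gram_vector_def inner_commute)
  have "x \<in> polytope_P S" using ext by (simp add: extreme_point_of_def)
  then show "Kcirc ((1 / norm x) *\<^sub>R x) (1 / norm x) \<inter> S = {}"
    using Kcirc_disjoint_iff_in_polytope_P[OF unit, of "(1 / norm x) *\<^sub>R x" "1 / norm x"] nx
    by simp
next
  fix B u \<alpha>
  assume "B \<subseteq> S" and "is_basis B" and "gram_vector B u \<alpha>" and K: "Kcirc u \<alpha> \<inter> S = {}"
  then have span: "span B = UNIV" and "norm u = 1" "\<alpha> > 0" and "\<forall>d\<in>B. u \<bullet> d = \<alpha>"
    by (auto simp: is_basis_def gram_vector_def)
  then show tight: "\<forall>d\<in>B. ((1 / \<alpha>) *\<^sub>R u) \<bullet> d = 1" by simp
  have "(1 / \<alpha>) *\<^sub>R u \<in> polytope_P S"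
    using K Kcirc_disjoint_iff_in_polytope_P[OF unit \<open>norm u = 1\<close> \<open>\<alpha> > 0\<close>] by simp
  then show "((1 / \<alpha>) *\<^sub>R u) extreme_point_of polytope_P S"
    using extreme_point_of_polytope_P_if_tight_on_spanning[OF \<open>B \<subseteq> S\<close> span] tight by blast
  fix y
  assume "y extreme_point_of polytope_P S \<and> (\<forall>d\<in>B. y \<bullet> d = 1)"
  then show "y = (1 / \<alpha>) *\<^sub>R u"
    using eq_if_inner_eq_on_spanning[OF span] tight by metis
qed

end
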